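(* Let $\mathcal{V}$ and $\mathcal{X}$ be finite sets, let $k\ge1$, $T\ge1$ be integers, and let $f:2^{\mathcal{V}\times\mathcal{X}}\to\mathbb{R}_{\ge0}$ satisfy $f(\emptyset)=0$ and be monotone and submodular: for all $W_1\subseteq W_2\subseteq\mathcal{V}\times\mathcal{X}$ and all $W\subseteq\mathcal{V}\times\mathcal{X}$, $f(W_2)\ge f(W_1)$ and $\Delta(W\mid W_1)\ge\Delta(W\mid W_2)$, where $\Delta(A\mid S)=f(S\cup A)-f(S)$. Suppose moreover there is a constant $C(k)>0$ such that for every $x\in\mathcal{X}$ and every $S\subseteq\mathcal{V}\times\mathcal{X}$ there exists $R(x,S)\subseteq\mathcal{V}$ with $|R(x,S)|\le k$ and $$\Delta\big(R(x,S)\times\{x\}\mid S\big)\ge C(k)\,\Delta\big(\mathcal{V}\times\{x\}\mid S\big).$$ Define the two-stage greedy sequence by $S_0=\emptyset$ and, for $t=1,\dots,T$, $$x_t\in\arg\max_{x\in\mathcal{X}}\Delta(\mathcal{V}\times\{x\}\mid S_{t-1}),\qquad R_t\in\arg\max_{R\subseteq\mathcal{V},\,|R|\le k}\Delta(R\times\{x_t\}\mid S_{t-1}),\qquad S_t=S_{t-1}\cup(R_t\times\{x_t\}).$$ Then for every sequence $(R_1^*,x_1^* ),\dots,(R_T^*,x_T^* )$ with $R_t^*\subseteq\mathcal{V}$, $|R_t^*|\le k$ and pairwise distinct $x_1^*,\dots,x_T^*\in\mathcal{X}$, setting $S_T^*=\bigcup_{t=1}^T R_t^*\times\{x_t^*\}$,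 $$f(S_T^* )\le\frac{2}{1-e^{-2C(k)}}\,f(S_T).$$
   Context: A pair $(R,x)$ with $R\subseteq\mathcal{V}$ (respondents), $x\in\mathcal{X}$ (query) is identified with the set $R\times\{x\}\subseteq\mathcal{V}\times\mathcal{X}$; histories are unions of such sets. The first stage chooses the query that would be most informative if asked to all respondents; the second stage chooses at most $k$ respondents for that query. *)

theory Defs
  imports Complex_Main
begin

definition marg :: "('a set \<Rightarrow> real) \<Rightarrow> 'a set \<Rightarrow> 'a set \<Rightarrow> real" where
  "marg f A S = f (S \<union> A) - f S"

end

theory Submission
  imports Defs
begin

text \<open>A competing solution with query set \<open>Y\<close> is dominated by \<open>V \<times> Y\<close>, where \<open>card Y \<le> T\<close>.
  By submodularity, the gap between \<open>f (V \<times> Y)\<close> and the value of the current greedy set is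
  at most the sum over \<open>y \<in> Y\<close> of the gains of \<open>V \<times> {y}\<close>, each of which is
  at most the gain of the first-stage choice; the second stage recovers a \<open>C\<close>-fraction of that
  gain. Hence every step closes at least a \<open>C / T\<close>-fraction of the gap, so after \<open>T\<close>
  steps at most a fraction \<open>(1 - C / T) ^ T \<le> exp (- C)\<close> of \<open>f (V \<times> Y)\<close> is left. The bound
  \<open>f (V \<times> Y) \<le> f S\<^sub>T / (1 - exp (- C))\<close> obtained this way is stronger than the claimed one,
  since \<open>1 - exp (-2 C) \<le> 2 (1 - exp (- C))\<close>.\<close>

locale monotone_submodular =
  fixes Om :: "'a set" and f :: "'a set \<Rightarrow> real"
  assumes mono: "\<And>W1 W2. W1 \<subseteq> W2 \<Longrightarrow> W2 \<subseteq> Om \<Longrightarrow> f W1 \<le> f W2"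
    and submod: "\<And>W1 W2 W. W1 \<subseteq> W2 \<Longrightarrow> W2 \<subseteq> Om \<Longrightarrow> W \<subseteq> Om
                     \<Longrightarrow> marg f W W1 \<ge> marg f W W2"
begin

lemma marg_UNION_le_sum:
  assumes "finite J" and A: "A \<subseteq> Om" and B: "\<And>j. j \<in> J \<Longrightarrow> B j \<subseteq> Om"
  shows "marg f (\<Union>j\<in>J. B j) A \<le> (\<Sum>j\<in>J. marg f (B j) A)"
  using \<open>finite J\<close> B
proof (induction J rule: finite_induct)
  case empty
  then show ?case by (simp add: marg_def)
next
  case (insert i J)
  let ?U = "A \<union> (\<Union>j\<in>J. B j)"
  have "?U \<subseteq> Om" using A insert.prems by auto
  then have "marg f (B i) ?U \<le> marg f (B i) A"
    using submod[of A ?U "B i"] insert.prems by auto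
  moreover have "marg f (\<Union>j\<in>J. B j) A \<le> (\<Sum>j\<in>J. marg f (B j) A)"
    using insert by auto
  ultimately show ?case
    using insert.hyps by (simp add: marg_def Un_ac)
qed

end

text \<open>The factor \<open>1 - c\<close> may be negative, hence the clipping at \<open>0\<close> and the monotonicity
  hypothesis.\<close>

lemma max_zero_gap_decay:
  fixes a :: "nat \<Rightarrow> real"
  assumes contract: "\<And>t. t < n \<Longrightarrow> a (Suc t) \<le> (1 - c) * a t"
    and decr: "\<And>t. t < n \<Longrightarrow> a (Suc t) \<le> a t"
  shows "max 0 (a n) \<le> max 0 (1 - c) ^ n * max 0 (a 0)"
  using assms
proof (induction n)
  case 0
  then show ?case by simp
next
  case (Suc n)
  have "max 0 (a (Suc n)) \<le> max 0 (1 - c) * max 0 (a n)"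
  proof (cases "a (Suc n) > 0")
    case True
    then have "a n > 0" using Suc.prems(2)[of n] by simp
    then have "(1 - c) * a n \<le> max 0 (1 - c) * max 0 (a n)"
      by (simp add: mult_right_mono)
    then show ?thesis using True Suc.prems(1)[of n] by simp
  qed simp
  also have "\<dots> \<le> max 0 (1 - c) * (max 0 (1 - c) ^ n * max 0 (a 0))"
    using Suc by (simp add: mult_left_mono)
  finally show ?case by simp
qed

lemma max_zero_one_minus_div_power_le_exp:
  assumes "n \<ge> 1"
  shows "max 0 (1 - c / n) ^ n \<le> exp (- c)"
proof (cases "1 - c / n \<le> 0")
  case True
  then have "max 0 (1 - c / n) = 0" by simp
  then show ?thesis using assms by (simp add: power_0_left)
next
  case False
  then have "max 0 (1 - c / n) ^ n \<le> exp (- c / n) ^ n"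
    using exp_ge_add_one_self[of "- c / n"] by (intro power_mono) auto
  also have "\<dots> = exp (- c)"
    using assms by (simp flip: exp_of_nat_mult)
  finally show ?thesis .
qed

lemma one_minus_exp_double_le:
  fixes c :: real
  shows "(1 - exp (-2 * c)) / 2 \<le> 1 - exp (- c)"
proof -
  have "exp (-2 * c) = exp (- c) * exp (- c)"
    by (simp flip: exp_add)
  moreover have "0 \<le> (1 - exp (- c)) * (1 - exp (- c))" by simp
  ultimately show ?thesis by (simp add: field_simps)
qed

locale two_stage_greedy = monotone_submodular "V \<times> X" f
  for V :: "'v set" and X :: "'x set" and f :: "('v \<times> 'x) set \<Rightarrow> real" +
  fixes k T :: nat and C :: real
    and S :: "nat \<Rightarrow> ('v \<times> 'x) set" and xg :: "nat \<Rightarrow> 'x" and Rg :: "nat \<Rightarrow> 'v set"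
  assumes finX: "finite X" and T1: "T \<ge> 1"
    and f_empty: "f {} = 0"
    and C_nonneg: "C \<ge> 0"
    and C_prop: "\<And>x Sa. x \<in> X \<Longrightarrow> Sa \<subseteq> V \<times> X \<Longrightarrow>
                   \<exists>R. R \<subseteq> V \<and> card R \<le> k \<and>
                       marg f (R \<times> {x}) Sa \<ge> C * marg f (V \<times> {x}) Sa"
    and S0: "S 0 = {}"
    and x_greedy: "\<And>t. t \<in> {1..T} \<Longrightarrow> xg t \<in> X \<and>
                     (\<forall>x\<in>X. marg f (V \<times> {x}) (S (t - 1)) \<le> marg f (V \<times> {xg t}) (S (t - 1)))"
    and R_greedy: "\<And>t. t \<in> {1..T} \<Longrightarrow> Rg t \<subseteq> V \<and> card (Rg t) \<le> k \<and>
                     (\<forall>R. R \<subseteq> V \<and> card R \<le> k \<longrightarrow>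
                        marg f (R \<times> {xg t}) (S (t - 1)) \<le> marg f (Rg t \<times> {xg t}) (S (t - 1)))"
    and S_step: "\<And>t. t \<in> {1..T} \<Longrightarrow> S t = S (t - 1) \<union> (Rg t \<times> {xg t})"
begin

lemma S_subset: "t \<le> T \<Longrightarrow> S t \<subseteq> V \<times> X"
proof (induction t)
  case 0
  then show ?case using S0 by simp
next
  case (Suc t)
  then have "Suc t \<in> {1..T}" by simp
  from S_step[OF this] R_greedy[OF this] x_greedy[OF this] Suc show ?case by auto
qed

lemma S_Suc_gain_ge:
  assumes "t < T"
  shows "C * marg f (V \<times> {xg (Suc t)}) (S t) \<le> f (S (Suc t)) - f (S t)"
proof -
  have t: "Suc t \<in> {1..T}" using assms by simp
  have "xg (Suc t) \<in> X" "S t \<subseteq> V \<times> X"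
    using x_greedy[OF t] S_subset assms by auto
  from C_prop[OF this] obtain R where R: "R \<subseteq> V" "card R \<le> k"
      and R_gain: "C * marg f (V \<times> {xg (Suc t)}) (S t) \<le> marg f (R \<times> {xg (Suc t)}) (S t)"
    by blast
  note R_gain
  also have "\<dots> \<le> marg f (Rg (Suc t) \<times> {xg (Suc t)}) (S t)"
    using R_greedy[OF t] R by simp
  also have "\<dots> = f (S (Suc t)) - f (S t)"
    using S_step[OF t] by (simp add: marg_def)
  finally show ?thesis .
qed

lemma gap_le_card_times_first_stage_gain:
  assumes "t < T" and Y: "Y \<subseteq> X"
  shows "f (V \<times> Y) - f (S t) \<le> card Y * marg f (V \<times> {xg (Suc t)}) (S t)"
proof -
  have t: "Suc t \<in> {1..T}" using assms by simp
  have St: "S t \<subseteq> V \<times> X" using assms by (simp add: S_subset)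
  have "(\<Union>y\<in>Y. V \<times> {y}) = V \<times> Y" by auto
  then have "f (V \<times> Y) - f (S t) \<le> marg f (\<Union>y\<in>Y. V \<times> {y}) (S t)"
    using mono[of "V \<times> Y" "S t \<union> V \<times> Y"] St Y unfolding marg_def by auto
  also have "\<dots> \<le> (\<Sum>y\<in>Y. marg f (V \<times> {y}) (S t))"
    using Y St finite_subset[OF Y finX] by (intro marg_UNION_le_sum) auto
  also have "\<dots> \<le> (\<Sum>y\<in>Y. marg f (V \<times> {xg (Suc t)}) (S t))"
    using x_greedy[OF t] Y by (intro sum_mono) auto
  finally show ?thesis by simp
qed

lemma gap_Suc_le:
  assumes "t < T" and Y: "Y \<subseteq> X" "card Y \<le> T"
  shows "f (V \<times> Y) - f (S (Suc t)) \<le> (1 - C / T) * (f (V \<times> Y) - f (S t))"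
proof -
  let ?D = "marg f (V \<times> {xg (Suc t)}) (S t)"
  have D_nonneg: "?D \<ge> 0"
    using assms S_subset x_greedy[of "Suc t"] mono[of "S t" "S t \<union> V \<times> {xg (Suc t)}"]
    unfolding marg_def by auto
  have "C * (f (V \<times> Y) - f (S t)) \<le> C * (card Y * ?D)"
    using gap_le_card_times_first_stage_gain[OF assms(1,2)] C_nonneg by (rule mult_left_mono)
  also have "\<dots> = card Y * (C * ?D)" by (simp add: mult.left_commute)
  also have "\<dots> \<le> T * (C * ?D)"
    using Y(2) C_nonneg D_nonneg by (intro mult_right_mono) auto
  also have "\<dots> \<le> T * (f (S (Suc t)) - f (S t))"
    using S_Suc_gain_ge[OF assms(1)] by (intro mult_left_mono) auto
  finally show ?thesis using T1 by (simp add: field_simps)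
qed

lemma f_S_le_f_S_Suc:
  assumes "t < T"
  shows "f (S t) \<le> f (S (Suc t))"
proof (rule mono)
  have "Suc t \<in> {1..T}" using assms by simp
  then show "S t \<subseteq> S (Suc t)" using S_step by fastforce
  show "S (Suc t) \<subseteq> V \<times> X" using assms by (simp add: S_subset)
qed

theorem greedy_approximation:
  assumes Y: "Y \<subseteq> X" "card Y \<le> T"
  shows "(1 - exp (- C)) * f (V \<times> Y) \<le> f (S T)"
proof -
  define gap where "gap t = f (V \<times> Y) - f (S t)" for t
  have gap0: "gap 0 = f (V \<times> Y)" and F_nonneg: "f (V \<times> Y) \<ge> 0"
    using S0 f_empty mono[of "{}" "V \<times> Y"] Y unfolding gap_def by auto
  have "gap T \<le> max 0 (1 - C / T) ^ T * max 0 (gap 0)"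
    using max_zero_gap_decay[of T gap "C / T"] gap_Suc_le[OF _ Y] f_S_le_f_S_Suc
    unfolding gap_def by fastforce
  also have "\<dots> \<le> exp (- C) * f (V \<times> Y)"
    using max_zero_one_minus_div_power_le_exp[OF T1, of C] gap0 F_nonneg
    by (simp add: mult_right_mono)
  finally show ?thesis unfolding gap_def by (simp add: algebra_simps)
qed

end

theorem mainTheorem2:
  fixes V :: "'v set" and X :: "'x set"
    and f :: "('v \<times> 'x) set \<Rightarrow> real"
    and k T :: nat and C :: real
    and S :: "nat \<Rightarrow> ('v \<times> 'x) set" and xg :: "nat \<Rightarrow> 'x" and Rg :: "nat \<Rightarrow> 'v set"
  assumes finV: "finite V" and finX: "finite X"
    and k1: "k \<ge> 1" and T1: "T \<ge> 1"
    and f_empty: "f {} = 0"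
    and f_nonneg: "\<And>W. W \<subseteq> V \<times> X \<Longrightarrow> f W \<ge> 0"
    and f_mono: "\<And>W1 W2. W1 \<subseteq> W2 \<Longrightarrow> W2 \<subseteq> V \<times> X \<Longrightarrow> f W1 \<le> f W2"
    and f_submod: "\<And>W1 W2 W. W1 \<subseteq> W2 \<Longrightarrow> W2 \<subseteq> V \<times> X \<Longrightarrow> W \<subseteq> V \<times> X
                     \<Longrightarrow> marg f W W1 \<ge> marg f W W2"
    and C_pos: "C > 0"
    and C_prop: "\<And>x Sa. x \<in> X \<Longrightarrow> Sa \<subseteq> V \<times> X \<Longrightarrow>
                   \<exists>R. R \<subseteq> V \<and> card R \<le> k \<and>
                       marg f (R \<times> {x}) Sa \<ge> C * marg f (V \<times> {x}) Sa"
    and S0: "S 0 = {}"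
    and x_greedy: "\<And>t. t \<in> {1..T} \<Longrightarrow> xg t \<in> X \<and>
                     (\<forall>x\<in>X. marg f (V \<times> {x}) (S (t - 1)) \<le> marg f (V \<times> {xg t}) (S (t - 1)))"
    and R_greedy: "\<And>t. t \<in> {1..T} \<Longrightarrow> Rg t \<subseteq> V \<and> card (Rg t) \<le> k \<and>
                     (\<forall>R. R \<subseteq> V \<and> card R \<le> k \<longrightarrow>
                        marg f (R \<times> {xg t}) (S (t - 1)) \<le> marg f (Rg t \<times> {xg t}) (S (t - 1)))"
    and S_step: "\<And>t. t \<in> {1..T} \<Longrightarrow> S t = S (t - 1) \<union> (Rg t \<times> {xg t})"
  shows "\<forall>Rs :: nat \<Rightarrow> 'v set. \<forall>xs :: nat \<Rightarrow> 'x.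
           (\<forall>t\<in>{1..T}. Rs t \<subseteq> V \<and> card (Rs t) \<le> k \<and> xs t \<in> X) \<and> inj_on xs {1..T}
           \<longrightarrow> f (\<Union>t\<in>{1..T}. Rs t \<times> {xs t}) \<le> 2 / (1 - exp (-2 * C)) * f (S T)"
proof (intro allI impI)
  interpret two_stage_greedy V X f k T C S xg Rg
    by unfold_locales (use assms in auto)
  fix Rs :: "nat \<Rightarrow> 'v set" and xs :: "nat \<Rightarrow> 'x"
  assume H: "(\<forall>t\<in>{1..T}. Rs t \<subseteq> V \<and> card (Rs t) \<le> k \<and> xs t \<in> X) \<and> inj_on xs {1..T}"
  let ?Y = "xs ` {1..T}"
  have Y: "?Y \<subseteq> X" "card ?Y \<le> T"
    using H card_image_le[of "{1..T}" xs] by auto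
  have "f (\<Union>t\<in>{1..T}. Rs t \<times> {xs t}) \<le> f (V \<times> ?Y)"
    using H by (intro f_mono) auto
  also have "\<dots> \<le> 2 / (1 - exp (-2 * C)) * f (S T)"
  proof -
    have "f (V \<times> ?Y) \<ge> 0" using f_nonneg Y(1) by (meson order_refl Sigma_mono)
    then have "(1 - exp (-2 * C)) / 2 * f (V \<times> ?Y) \<le> (1 - exp (- C)) * f (V \<times> ?Y)"
      by (rule mult_right_mono[OF one_minus_exp_double_le])
    then have "(1 - exp (-2 * C)) / 2 * f (V \<times> ?Y) \<le> f (S T)"
      using greedy_approximation[OF Y] by linarith
    moreover have "1 - exp (-2 * C) > 0" using C_pos by simp
    ultimately show ?thesis by (simp add: field_simps)
  qed
  finally show "f (\<Union>t\<in>{1..T}. Rs t \<times> {xs t}) \<le> 2 / (1 - exp (-2 * C)) * f (S T)" .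
qed

end
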